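(* If $A\in\mathsf{M}_n(\mathbb{C})$ is $h$-cyclic and nonsingular, then $h$ divides $n$.
   Context: The digraph $\Gamma_A$ of $A=[a_{ij}]\in\mathsf{M}_n(\mathbb{C})$ has vertex set $\{1,\dots,n\}$ and arc set $\{(i,j): a_{ij}\neq 0\}$. $A$ is $h$-cyclic if there is a partition $P=\{V_1,\dots,V_h\}$ of $\{1,\dots,n\}$ into $h$ nonempty parts such that for every arc $(i,j)$ of $\Gamma_A$ there is $\ell\in\{1,\dots,h\}$ with $i\in V_\ell$ and $j\in V_{\ell+1}$, where $V_{h+1}:=V_1$. *)

theory Defs
  imports "Jordan_Normal_Form.Determinant"
begin

text \<open>Vertices of the digraph of an n x n matrix are 0,...,n-1 (0-based indexing).\<close>

definition digraph_arcs :: "complex mat \<Rightarrow> (nat \<times> nat) set" where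
  "digraph_arcs A = {(i, j). i < dim_row A \<and> j < dim_col A \<and> A $$ (i, j) \<noteq> 0}"

definition h_cyclic :: "complex mat \<Rightarrow> nat \<Rightarrow> bool" where
  "h_cyclic A h \<longleftrightarrow> (\<exists>V :: nat \<Rightarrow> nat set.
     (\<forall>l<h. V l \<noteq> {}) \<and>
     (\<Union>l<h. V l) = {..<dim_row A} \<and>
     (\<forall>l<h. \<forall>l'<h. l \<noteq> l' \<longrightarrow> V l \<inter> V l' = {}) \<and>
     (\<forall>(i, j) \<in> digraph_arcs A. \<exists>l<h. i \<in> V l \<and> j \<in> V ((l + 1) mod h)))"

end

theory Submission
  imports Defs
begin

text \<open>A nonzero determinant has a nonzero term, i.e. a permutation p with every entry
  A(i, p i) nonzero. Each such entry is an arc of the digraph, so p maps the part V l into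
  V (l + 1); being injective, p cannot shrink any part. Going once around the cycle of parts
  forces all parts to have the same size, whence n is h times that size.\<close>

lemma det_nonzero_imp_nonzero_permutation_entries:
  fixes A :: "'a :: comm_ring_1 mat"
  assumes "A \<in> carrier_mat n n" and "det A \<noteq> 0"
  obtains p where "p permutes {..<n}" and "\<And>i. i < n \<Longrightarrow> A $$ (i, p i) \<noteq> 0"
proof -
  have "\<exists>p. p permutes {..<n} \<and> (\<forall>i<n. A $$ (i, p i) \<noteq> 0)"
  proof (rule ccontr)
    assume no_term: "\<not> ?thesis"
    have "det A = (\<Sum>p \<in> {p. p permutes {0..<n}}. signof p * (\<Prod>i = 0..<n. A $$ (i, p i)))"
      using assms(1) unfolding det_def by auto
    also have "\<dots> = 0"
    proof (intro sum.neutral ballI)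
      fix p assume "p \<in> {p. p permutes {0..<n}}"
      with no_term obtain i where "i < n" "A $$ (i, p i) = 0"
        by (auto simp: atLeast0LessThan)
      then have "(\<Prod>i = 0..<n. A $$ (i, p i)) = 0"
        by (intro prod_zero) auto
      then show "signof p * (\<Prod>i = 0..<n. A $$ (i, p i)) = 0" by simp
    qed
    finally show False using assms(2) by contradiction
  qed
  then show thesis using that by blast
qed

lemma cyclically_monotone_imp_constant:
  fixes f :: "nat \<Rightarrow> 'a :: order"
  assumes step: "\<And>l. l < h \<Longrightarrow> f l \<le> f ((l + 1) mod h)" and "l < h"
  shows "f l = f 0"
proof -
  have "f k \<le> f (Suc k)" if "k \<in> {..<h - 1}" for k
    using step[of k] that by simp
  then have along: "f i \<le> f j" if "i \<le> j" "j < h" for i j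
    by (rule lift_Suc_mono_le_ivl[where N = "{..<h - 1}"]) (use that in auto)
  have "f 0 \<le> f l" "f l \<le> f (h - 1)"
    using along \<open>l < h\<close> by auto
  moreover have "f (h - 1) \<le> f 0"
    using step[of "h - 1"] \<open>l < h\<close> by simp
  ultimately show ?thesis
    by (meson antisym order_trans)
qed

lemma card_parts_eq_if_inj_shifts_parts:
  fixes V :: "nat \<Rightarrow> 'a set"
  assumes "inj_on f (\<Union>l<h. V l)"
    and "\<And>l. l < h \<Longrightarrow> finite (V l)"
    and "\<And>l. l < h \<Longrightarrow> f ` V l \<subseteq> V ((l + 1) mod h)"
    and "l < h"
  shows "card (V l) = card (V 0)"
proof (rule cyclically_monotone_imp_constant[of h "\<lambda>l. card (V l)"])
  fix l assume "l < h"
  then have "card (V l) = card (f ` V l)"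
    using assms(1) by (intro card_image[symmetric] inj_on_subset[OF assms(1)]) auto
  also have "\<dots> \<le> card (V ((l + 1) mod h))"
    using assms(2,3) \<open>l < h\<close> by (intro card_mono) auto
  finally show "card (V l) \<le> card (V ((l + 1) mod h))" .
qed (fact assms(4))

lemma card_UN_parts_eq_card_mult:
  fixes V :: "nat \<Rightarrow> 'a set"
  assumes "\<And>l. l < h \<Longrightarrow> finite (V l)"
    and "\<forall>l<h. \<forall>l'<h. l \<noteq> l' \<longrightarrow> V l \<inter> V l' = {}"
    and "\<And>l. l < h \<Longrightarrow> card (V l) = c"
  shows "card (\<Union>l<h. V l) = h * c"
proof -
  have "card (\<Union>l<h. V l) = (\<Sum>l<h. card (V l))"
    using assms(1,2) by (intro card_UN_disjoint) auto
  also have "\<dots> = h * c"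
    using assms(3) by simp
  finally show ?thesis .
qed

lemma arcs_map_part_into_next_part:
  assumes arcs: "\<forall>(i, j) \<in> E. \<exists>l<h. i \<in> V l \<and> j \<in> V ((l + 1) mod h)"
    and disjoint: "\<forall>l<h. \<forall>l'<h. l \<noteq> l' \<longrightarrow> V l \<inter> V l' = {}"
    and "\<And>i. i \<in> V l \<Longrightarrow> (i, f i) \<in> E" and "l < h"
  shows "f ` V l \<subseteq> V ((l + 1) mod h)"
proof
  fix j assume "j \<in> f ` V l"
  then obtain i where "i \<in> V l" and j: "j = f i" by blast
  then obtain l' where "l' < h" "i \<in> V l'" "f i \<in> V ((l' + 1) mod h)"
    using arcs assms(3) by blast
  moreover have "l' = l"
    using disjoint \<open>l' < h\<close> \<open>i \<in> V l'\<close> \<open>i \<in> V l\<close> \<open>l < h\<close> by blast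
  ultimately show "j \<in> V ((l + 1) mod h)"
    unfolding j by simp
qed

theorem corollary3p2:
  fixes A :: "complex mat" and n h :: nat
  assumes "A \<in> carrier_mat n n"
    and "h_cyclic A h"
    and "det A \<noteq> 0"
  shows "h dvd n"
proof -
  obtain V :: "nat \<Rightarrow> nat set" where
    cover: "(\<Union>l<h. V l) = {..<n}" and
    disjoint: "\<forall>l<h. \<forall>l'<h. l \<noteq> l' \<longrightarrow> V l \<inter> V l' = {}" and
    arcs: "\<forall>(i, j) \<in> digraph_arcs A. \<exists>l<h. i \<in> V l \<and> j \<in> V ((l + 1) mod h)"
    using assms(1,2) unfolding h_cyclic_def by auto
  obtain p where perm: "p permutes {..<n}" and entries: "\<And>i. i < n \<Longrightarrow> A $$ (i, p i) \<noteq> 0"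
    using det_nonzero_imp_nonzero_permutation_entries assms(1,3) by blast
  have finite: "finite (V l)" if "l < h" for l
    using cover that by (metis UN_upper finite_lessThan finite_subset lessThan_iff)
  have shift: "p ` V l \<subseteq> V ((l + 1) mod h)" if "l < h" for l
  proof (rule arcs_map_part_into_next_part[OF arcs disjoint _ that])
    fix i assume "i \<in> V l"
    then have "i < n" using cover that by blast
    then show "(i, p i) \<in> digraph_arcs A"
      using entries permutes_in_image[OF perm] assms(1) unfolding digraph_arcs_def by auto
  qed
  have equal_size: "card (V l) = card (V 0)" if "l < h" for l
    using permutes_inj_on[OF perm] finite shift that by (rule card_parts_eq_if_inj_shifts_parts)
  have "n = h * card (V 0)"
    using card_UN_parts_eq_card_mult[OF finite disjoint equal_size] cover by simp
  then show ?thesis by simp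
qed

end
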